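(* For each $f\in L^\infty(\mathbb{R}^{d_1+d_2})$ there exists a sparse family $\mathcal{S}$ of dyadic rectangles such that $$\mathcal{M}_{\mathscr{D}\times\mathscr{D}}f(x)\lesssim \mathcal{P}^{\frac12}_{\mathscr{D}\times\mathscr{D}}(\mathcal{M}_\mathcal{S}f)(x),\qquad x\in\mathbb{R}^{d_1+d_2},$$ with implicit constant independent of $f$.
   Context: A dyadic rectangle is a set $Q_1\times Q_2$ with $Q_1\in\mathscr{D}(\mathbb{R}^{d_1})$, $Q_2\in\mathscr{D}(\mathbb{R}^{d_2})$ (standard dyadic grids). $\langle f\rangle_R=\frac1{|R|}\int_Rf$. $\mathcal{M}_{\mathscr{D}\times\mathscr{D}}f(x)=\sup_{x\in R}|\langle f\rangle_R|$ over dyadic rectangles $R$. For a set $\Omega$ of positive finite measure and measurable $g$, $\mathsf{P}^r_\Omega(g):=\inf\{\lambda\in\mathbb{R}:|\{x\in\Omega:g(x)>\lambda\}|\le r|\Omega|\}$, and $\mathcal{P}^r_{\mathscr{D}\times\mathscr{D}}g(x)=\sup_{x\in R}\mathsf{P}^r_R(|g|)$ over dyadic rectangles $R$. A family $\mathcal{S}$ of dyadic rectangles is sparse if there are pairwise disjoint sets $E_R\subset R$, $R\in\mathcal{S}$, with $|E_R|\ge\frac12|R|$; $\mathcal{M}_\mathcal{S}f(x)=\sup_{R\in\mathcal{S}}|\langle f\rangle_R|\mathbf{1}_R(x)$. *)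

theory Defs
  imports "HOL-Analysis.Analysis"
begin

definition dyadic_cube :: "int \<Rightarrow> ('n::finite \<Rightarrow> int) \<Rightarrow> (real^'n) set" where
  "dyadic_cube k m = {x. \<forall>i. 2 powr (real_of_int k) * real_of_int (m i) \<le> x $ i
                          \<and> x $ i < 2 powr (real_of_int k) * (real_of_int (m i) + 1)}"

definition dyadic_grid :: "(real^'n::finite) set set" where
  "dyadic_grid = {Q. \<exists>k m. Q = dyadic_cube k m}"

definition dyadic_rects :: "((real^'n::finite) \<times> (real^'m::finite)) set set" where
  "dyadic_rects = {Q1 \<times> Q2 | Q1 Q2. Q1 \<in> dyadic_grid \<and> Q2 \<in> dyadic_grid}"

definition avg :: "('a::euclidean_space \<Rightarrow> real) \<Rightarrow> 'a set \<Rightarrow> real" where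
  "avg f R = (1 / measure lebesgue R) * (LINT x:R|lebesgue. f x)"

definition strong_max :: "((real^'n::finite) \<times> (real^'m::finite) \<Rightarrow> real)
     \<Rightarrow> (real^'n) \<times> (real^'m) \<Rightarrow> ereal" where
  "strong_max f x = (SUP R \<in> {R \<in> dyadic_rects. x \<in> R}. ereal \<bar>avg f R\<bar>)"

definition Pquant :: "real \<Rightarrow> 'a::euclidean_space set \<Rightarrow> ('a \<Rightarrow> ereal) \<Rightarrow> ereal" where
  "Pquant r \<Omega> g = Inf (ereal ` {t::real.
      emeasure lebesgue {x \<in> \<Omega>. g x > ereal t} \<le> ereal r * emeasure lebesgue \<Omega>})"

definition Pmax :: "real \<Rightarrow> ((real^'n::finite) \<times> (real^'m::finite) \<Rightarrow> ereal)
     \<Rightarrow> (real^'n) \<times> (real^'m) \<Rightarrow> ereal" where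
  "Pmax r g x = (SUP R \<in> {R \<in> dyadic_rects. x \<in> R}. Pquant r R (\<lambda>y. \<bar>g y\<bar>))"

definition sparse :: "((real^'n::finite) \<times> (real^'m::finite)) set set \<Rightarrow> bool" where
  "sparse S \<longleftrightarrow> S \<subseteq> dyadic_rects \<and>
     (\<exists>E. (\<forall>R\<in>S. E R \<subseteq> R \<and> E R \<in> sets lebesgue
                  \<and> emeasure lebesgue (E R) \<ge> ereal (1/2) * emeasure lebesgue R)
        \<and> (\<forall>R\<in>S. \<forall>R'\<in>S. R \<noteq> R' \<longrightarrow> E R \<inter> E R' = {}))"

text \<open>Sparse maximal function; the supremum of the nonnegative quantities
  over an empty family is taken to be 0.\<close>
definition sparse_max :: "((real^'n::finite) \<times> (real^'m::finite)) set set
     \<Rightarrow> ((real^'n) \<times> (real^'m) \<Rightarrow> real) \<Rightarrow> (real^'n) \<times> (real^'m) \<Rightarrow> ereal" where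
  "sparse_max S f x = Sup (insert 0 ((\<lambda>R. ereal (\<bar>avg f R\<bar> * indicator R x)) ` S))"

definition Linfty :: "('a::euclidean_space \<Rightarrow> real) \<Rightarrow> bool" where
  "Linfty f \<longleftrightarrow> f \<in> borel_measurable lebesgue \<and> (\<exists>B. AE x in lebesgue. \<bar>f x\<bar> \<le> B)"

end

theory Submission
  imports Defs
begin

text \<open>
  Bound \<open>|f|\<close> by \<open>B\<close> and sort the dyadic rectangles into the levels
  \<open>B/2^(n+1) < |avg f R| \<le> B/2^n\<close>. Going through the levels from the top, and through
  each (countable) level along an enumeration, select a rectangle whenever at least half of it is
  not yet covered by the rectangles selected before; these uncovered halves are the disjoint sets
  that make the selection sparse. Every rectangle \<open>R\<close> of level \<open>n\<close> is then more
  than half covered by selected rectangles of level at most \<open>n\<close>, on which the sparse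
  maximal function exceeds \<open>B/2^(n+1) \<ge> |avg f R|/2\<close>. So the median-type quantity
  \<open>Pquant (1/2) R\<close> of the sparse maximal function is at least \<open>|avg f R|/2\<close>, and the
  theorem holds with constant 2.
\<close>

context
  fixes M :: "'a measure" and r :: "nat \<Rightarrow> 'a set" and W0 :: "'a set"
begin

definition greedy_cover :: "nat \<Rightarrow> 'a set" where
  "greedy_cover = rec_nat W0 (\<lambda>i W. if measure M (r i) / 2 \<le> measure M (r i - W) then W \<union> r i else W)"

definition greedy_pick :: "nat \<Rightarrow> bool" where
  "greedy_pick i \<longleftrightarrow> measure M (r i) / 2 \<le> measure M (r i - greedy_cover i)"

lemma greedy_cover_0: "greedy_cover 0 = W0"
  by (simp add: greedy_cover_def)

lemma greedy_cover_Suc: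
  "greedy_cover (Suc i) = (if greedy_pick i then greedy_cover i \<union> r i else greedy_cover i)"
  by (simp add: greedy_cover_def greedy_pick_def)

lemma greedy_cover_mono: "i \<le> j \<Longrightarrow> greedy_cover i \<subseteq> greedy_cover j"
  by (induction j) (auto simp: greedy_cover_Suc le_Suc_eq)

lemma greedy_pick_subset_cover: "greedy_pick i \<Longrightarrow> i < j \<Longrightarrow> r i \<subseteq> greedy_cover j"
  using greedy_cover_mono[of "Suc i" j] by (auto simp: greedy_cover_Suc)

lemma greedy_cover_subset: "greedy_cover i \<subseteq> W0 \<union> \<Union>(r ` {j. greedy_pick j})"
  by (induction i) (auto simp: greedy_cover_0 greedy_cover_Suc)

lemma greedy_cover_sets: "W0 \<in> sets M \<Longrightarrow> (\<And>i. r i \<in> sets M) \<Longrightarrow> greedy_cover i \<in> sets M"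
  by (induction i) (auto simp: greedy_cover_0 greedy_cover_Suc)

lemma greedy_pick_inj:
  assumes "\<And>i. 0 < measure M (r i)" "greedy_pick i" "greedy_pick j" "r i = r j"
  shows "i = j"
proof -
  have "\<not> r j \<subseteq> greedy_cover j" if "greedy_pick j" for j
  proof
    assume "r j \<subseteq> greedy_cover j"
    then have "r j - greedy_cover j = {}" by blast
    then have "measure M (r j - greedy_cover j) = 0" by (simp only: measure_empty)
    then show False using that assms(1)[of j] unfolding greedy_pick_def by linarith
  qed
  then show ?thesis
    using assms(2-4) greedy_pick_subset_cover[of i j] greedy_pick_subset_cover[of j i]
    by (cases i j rule: linorder_cases) auto
qed

lemma greedy_fresh_disjoint:
  "greedy_pick i \<Longrightarrow> i < j \<Longrightarrow> (r i - greedy_cover i) \<inter> (r j - greedy_cover j) = {}"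
  using greedy_pick_subset_cover[of i j] by blast

lemma greedy_covered:
  assumes r: "\<And>i. r i \<in> fmeasurable M" "\<And>i. 0 < measure M (r i)" and W0: "W0 \<in> sets M"
  shows "measure M (r i) / 2 < measure M (r i \<inter> (W0 \<union> \<Union>(r ` {j. greedy_pick j})))"
    (is "_ < measure M (r i \<inter> ?U)")
proof (cases "greedy_pick i")
  case True
  then have "r i \<inter> ?U = r i"
    using greedy_cover_subset[of "Suc i"] by (auto simp: greedy_cover_Suc)
  then show ?thesis using r(2)[of i] by simp
next
  case False
  have W_sets: "greedy_cover i \<in> sets M" using W0 r(1) by (intro greedy_cover_sets) auto
  then have "measure M (r i - greedy_cover i) = measure M (r i) - measure M (r i \<inter> greedy_cover i)"
    using r(1)[of i] measure_Diff[of M "r i" "r i \<inter> greedy_cover i"]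
    by (auto simp: fmeasurable_def Diff_Int)
  then have "measure M (r i) / 2 < measure M (r i \<inter> greedy_cover i)"
    using False by (simp add: greedy_pick_def)
  also have "\<dots> \<le> measure M (r i \<inter> ?U)"
  proof (rule measure_mono_fmeasurable)
    have "r ` {j. greedy_pick j} \<subseteq> sets M" using r(1) by (auto intro: fmeasurableD)
    then have "?U \<in> sets M"
      using W0 by (intro sets.Un sets.countable_Union countable_image countableI_type)
    then show "r i \<inter> ?U \<in> fmeasurable M"
      by (intro fmeasurableI2[OF r(1)[of i]] sets.Int fmeasurableD[OF r(1)[of i]]) auto
  qed (use greedy_cover_subset[of i] W_sets r(1)[of i] in auto)
  finally show ?thesis .
qed

end

definition fresh_half_selection ::
    "'a measure \<Rightarrow> 'a set set \<Rightarrow> 'a set \<Rightarrow> 'a set set \<Rightarrow> ('a set \<Rightarrow> 'a set) \<Rightarrow> bool" where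
  "fresh_half_selection M C W S E \<longleftrightarrow> S \<subseteq> C \<and>
    (\<forall>R\<in>S. E R \<subseteq> R - W \<and> E R \<in> sets M \<and> measure M R / 2 \<le> measure M (E R)) \<and>
    disjoint_family_on E S \<and>
    (\<forall>R\<in>C. measure M R / 2 < measure M (R \<inter> (W \<union> \<Union>S)))"

lemma greedy_selection:
  assumes countable: "countable C"
    and C_fmeasurable: "C \<subseteq> fmeasurable M"
    and C_pos: "\<And>R. R \<in> C \<Longrightarrow> 0 < measure M R"
    and W0: "W0 \<in> sets M"
  shows "\<exists>S E. fresh_half_selection M C W0 S E"
proof (cases "C = {}")
  case True
  then show ?thesis by (auto simp: fresh_half_selection_def disjoint_family_on_def)
next
  case False
  \<comment> \<open>the enumeration may list a set several times, hence \<open>greedy_pick_inj\<close>\<close>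
  define r where "r = from_nat_into C"
  have r_range: "range r = C"
    using range_from_nat_into[OF False countable] by (simp add: r_def)
  have r_fmeasurable: "r i \<in> fmeasurable M" and r_pos: "0 < measure M (r i)" for i
    using C_fmeasurable C_pos r_range by auto
  let ?W = "greedy_cover M r W0" and ?pick = "greedy_pick M r W0"
  define S where "S = r ` {i. ?pick i}"
  define E where "E R = R - ?W (SOME i. ?pick i \<and> r i = R)" for R
  have E_r: "E (r i) = r i - ?W i" if "?pick i" for i
  proof -
    have "(SOME j. ?pick j \<and> r j = r i) = i"
      by (rule some_equality) (use that greedy_pick_inj[OF r_pos] in auto)
    then show ?thesis by (simp add: E_def)
  qed
  have "E R \<subseteq> R - W0 \<and> E R \<in> sets M \<and> measure M R / 2 \<le> measure M (E R)" if "R \<in> S" for R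
  proof -
    obtain i where i: "?pick i" "R = r i" using \<open>R \<in> S\<close> by (auto simp: S_def)
    have "?W i \<in> sets M" using W0 r_fmeasurable by (intro greedy_cover_sets) auto
    then show ?thesis
      using i E_r greedy_cover_mono[of 0 i M r W0] r_fmeasurable[of i]
      by (auto simp: greedy_cover_0 greedy_pick_def)
  qed
  moreover have "disjoint_family_on E S"
    unfolding disjoint_family_on_def S_def
  proof (clarsimp simp: E_r)
    fix i j assume "?pick i" "?pick j" "r i \<noteq> r j"
    then show "(r i - ?W i) \<inter> (r j - ?W j) = {}"
      using greedy_fresh_disjoint[where i=i and j=j] greedy_fresh_disjoint[where i=j and j=i]
      by (cases i j rule: linorder_cases) (auto simp: Int_commute)
  qed
  moreover have "measure M R / 2 < measure M (R \<inter> (W0 \<union> \<Union>S))" if "R \<in> C" for R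
  proof -
    obtain i where "R = r i" using \<open>R \<in> C\<close> r_range by auto
    then show ?thesis using greedy_covered[where i=i, OF r_fmeasurable r_pos W0] by (simp add: S_def)
  qed
  moreover have "S \<subseteq> C" using r_range by (auto simp: S_def)
  ultimately show ?thesis unfolding fresh_half_selection_def by blast
qed

lemma greedy_selection_per_level:
  fixes C :: "nat \<Rightarrow> 'a set set"
  assumes countable: "\<And>n. countable (C n)"
    and C_fmeasurable: "\<And>n. C n \<subseteq> fmeasurable M"
    and C_pos: "\<And>n R. R \<in> C n \<Longrightarrow> 0 < measure M R"
  obtains S :: "nat \<Rightarrow> 'a set set" and E :: "nat \<Rightarrow> 'a set \<Rightarrow> 'a set"
  where "\<And>n. S n \<subseteq> C n"
    and "\<And>n R. R \<in> S n \<Longrightarrow> E n R \<subseteq> R - \<Union>(\<Union>k<n. S k) \<and> E n R \<in> sets M \<and>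
      measure M R / 2 \<le> measure M (E n R)"
    and "\<And>n. disjoint_family_on (E n) (S n)"
    and "\<And>n R. R \<in> C n \<Longrightarrow> measure M R / 2 < measure M (R \<inter> \<Union>(\<Union>k\<le>n. S k))"
proof -
  let ?selection = "\<lambda>n W SE. fresh_half_selection M (C n) W (fst SE) (snd SE)"
  define F where "F n W = (SOME SE. ?selection n W SE)" for n W
  have F: "?selection n W (F n W)" if W: "W \<in> sets M" for n W
  proof -
    obtain S E where "fresh_half_selection M (C n) W S E"
      using greedy_selection[OF countable C_fmeasurable C_pos[where n=n] W] by blast
    then have "\<exists>SE. ?selection n W SE" by (intro exI[of _ "(S, E)"]) simp
    then show ?thesis unfolding F_def by (rule someI_ex)
  qed
  define W where "W = rec_nat {} (\<lambda>n Wn. Wn \<union> \<Union>(fst (F n Wn)))"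
  define S where "S n = fst (F n (W n))" for n
  define E where "E n = snd (F n (W n))" for n
  have W_0: "W 0 = {}" and W_Suc: "W (Suc n) = W n \<union> \<Union>(S n)" for n
    by (simp_all add: W_def S_def)
  have W_eq: "W n = \<Union>(\<Union>k<n. S k)" for n
    by (induction n) (auto simp: W_0 W_Suc lessThan_Suc)
  have sel: "fresh_half_selection M (C n) (W n) (S n) (E n)" for n
  proof (induction n rule: less_induct)
    case (less n)
    have "\<Union>(S k) \<in> sets M" if "k < n" for k
      using less[OF that] countable[of k] C_fmeasurable[of k]
      by (intro sets.countable_Union) (auto simp: fresh_half_selection_def intro: countable_subset)
    then have "(\<Union>k<n. \<Union>(S k)) \<in> sets M" by (intro sets.finite_UN) auto
    moreover have "W n = (\<Union>k<n. \<Union>(S k))" by (auto simp: W_eq)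
    ultimately have "W n \<in> sets M" by simp
    then show ?case using F by (simp add: S_def E_def)
  qed
  show ?thesis
  proof (rule that)
    fix n
    show "S n \<subseteq> C n" "disjoint_family_on (E n) (S n)"
      using sel[of n] by (simp_all add: fresh_half_selection_def)
    fix R assume "R \<in> C n"
    moreover have "W n \<union> \<Union>(S n) = \<Union>(\<Union>k\<le>n. S k)"
      using W_eq[of "Suc n"] by (simp add: W_Suc lessThan_Suc_atMost)
    ultimately show "measure M R / 2 < measure M (R \<inter> \<Union>(\<Union>k\<le>n. S k))"
      using sel[of n] by (simp add: fresh_half_selection_def)
  next
    fix n R assume "R \<in> S n"
    then show "E n R \<subseteq> R - \<Union>(\<Union>k<n. S k) \<and> E n R \<in> sets M \<and> measure M R / 2 \<le> measure M (E n R)"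
      using sel[of n] by (simp add: fresh_half_selection_def W_eq)
  qed
qed

lemma greedy_selection_by_levels:
  fixes C :: "nat \<Rightarrow> 'a set set"
  assumes countable: "\<And>n. countable (C n)"
    and C_fmeasurable: "\<And>n. C n \<subseteq> fmeasurable M"
    and C_pos: "\<And>n R. R \<in> C n \<Longrightarrow> 0 < measure M R"
  obtains S E where "\<And>n. S n \<subseteq> C n"
    and "\<And>R. R \<in> (\<Union>n. S n) \<Longrightarrow> E R \<subseteq> R \<and> E R \<in> sets M \<and> measure M R / 2 \<le> measure M (E R)"
    and "disjoint_family_on E (\<Union>n. S n)"
    and "\<And>n R. R \<in> C n \<Longrightarrow> measure M R / 2 < measure M (R \<inter> \<Union>(\<Union>k\<le>n. S k))"
proof (rule greedy_selection_per_level[where C=C, OF countable C_fmeasurable C_pos])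
  fix S :: "nat \<Rightarrow> 'a set set" and En :: "nat \<Rightarrow> 'a set \<Rightarrow> 'a set"
  assume S_C: "\<And>n. S n \<subseteq> C n"
    and En: "\<And>n R. R \<in> S n \<Longrightarrow> En n R \<subseteq> R - \<Union>(\<Union>k<n. S k) \<and> En n R \<in> sets M \<and>
      measure M R / 2 \<le> measure M (En n R)"
    and En_disjoint: "\<And>n. disjoint_family_on (En n) (S n)"
    and covered: "\<And>n R. R \<in> C n \<Longrightarrow> measure M R / 2 < measure M (R \<inter> \<Union>(\<Union>k\<le>n. S k))"
  have not_repicked: "R \<notin> S k" if "R \<in> S n" "n < k" for R n k
  proof
    assume "R \<in> S k"
    \<comment> \<open>\<open>R\<close> already lies in the cover of level \<open>k\<close>, so it has no fresh part there\<close>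
    with that have "En k R = {}" using En[of R k] by blast
    moreover have "0 < measure M R" using \<open>R \<in> S k\<close> S_C C_pos by blast
    ultimately show False using En[OF \<open>R \<in> S k\<close>] by simp
  qed
  have S_unique: "n = k" if "R \<in> S n" "R \<in> S k" for R n k
    using that not_repicked by (metis linorder_neqE_nat)
  define E where "E R = En (SOME n. R \<in> S n) R" for R
  have E_En: "E R = En n R" if "R \<in> S n" for R n
  proof -
    have "(SOME n. R \<in> S n) = n" using that S_unique by blast
    then show ?thesis by (simp add: E_def)
  qed
  have "E R \<inter> E R' = {}" if "R \<in> S n" "R' \<in> S k" "R \<noteq> R'" "n \<le> k" for R R' n k
  proof (cases "n = k")
    case True
    then show ?thesis
      using En_disjoint[of n] that by (auto simp: disjoint_family_on_def E_En)
  next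
    case False
    then have "R \<subseteq> \<Union>(\<Union>j<k. S j)" using that(1,4) by force
    moreover have "E R \<subseteq> R" "E R' \<inter> \<Union>(\<Union>j<k. S j) = {}"
      using that(1,2) En[of R n] En[of R' k] by (auto simp: E_En)
    ultimately show ?thesis by blast
  qed
  then have E_disjoint: "disjoint_family_on E (\<Union>n. S n)"
    unfolding disjoint_family_on_def by (metis UN_E Int_commute nat_le_linear)
  have E_props: "E R \<subseteq> R \<and> E R \<in> sets M \<and> measure M R / 2 \<le> measure M (E R)"
    if "R \<in> (\<Union>n. S n)" for R
  proof -
    obtain n where "R \<in> S n" using \<open>R \<in> (\<Union>n. S n)\<close> by blast
    then show ?thesis using En[of R n] E_En[of R n] by auto
  qed
  show thesis by (rule that[OF S_C E_props E_disjoint covered])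
qed

lemma emeasure_scaled_le_iff:
  assumes "A \<in> fmeasurable M" "B \<in> fmeasurable M" "0 \<le> r"
  shows "ennreal r * emeasure M A \<le> emeasure M B \<longleftrightarrow> r * measure M A \<le> measure M B"
  using assms by (simp add: emeasure_eq_measure2 ennreal_mult''[symmetric])

lemma emeasure_scaled_less_iff:
  assumes "A \<in> fmeasurable M" "B \<in> fmeasurable M" "0 \<le> r"
  shows "ennreal r * emeasure M A < emeasure M B \<longleftrightarrow> r * measure M A < measure M B"
  using assms by (simp add: emeasure_eq_measure2 ennreal_mult''[symmetric] ennreal_less_iff)

lemma dyadic_cube_between_boxes:
  fixes Q :: "(real^'n::finite) set"
  assumes "Q \<in> dyadic_grid"
  obtains a b where "box a b \<noteq> {}" "box a b \<subseteq> Q" "Q \<subseteq> cbox a b" "Q \<in> sets borel"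
proof -
  obtain k m where Q: "Q = dyadic_cube k m" using assms by (auto simp: dyadic_grid_def)
  define a :: "real^'n" where "a = (\<chi> i. 2 powr real_of_int k * real_of_int (m i))"
  define b :: "real^'n" where "b = (\<chi> i. 2 powr real_of_int k * (real_of_int (m i) + 1))"
  have Q_eq: "Q = {x. \<forall>i. a$i \<le> x$i \<and> x$i < b$i}" by (simp add: Q dyadic_cube_def a_def b_def)
  have "(1/2) *\<^sub>R (a + b) \<in> box a b"
    by (simp add: mem_box_cart a_def b_def field_simps)
  then have "box a b \<noteq> {}" by blast
  moreover have "box a b \<subseteq> Q" "Q \<subseteq> cbox a b"
    by (auto simp: Q_eq mem_box_cart less_imp_le)
  moreover have "Q \<in> sets borel" unfolding Q_eq by measurable
  ultimately show ?thesis using that by blast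
qed

lemma dyadic_rect_lmeasurable:
  assumes "R \<in> (dyadic_rects :: ((real^'n::finite) \<times> (real^'m::finite)) set set)"
  shows "R \<in> lmeasurable" and "0 < measure lebesgue R"
proof -
  obtain Q1 Q2 where R: "R = Q1 \<times> Q2" "Q1 \<in> dyadic_grid" "Q2 \<in> dyadic_grid"
    using assms by (auto simp: dyadic_rects_def)
  obtain a b c d where boxes: "box a b \<noteq> {}" "box c d \<noteq> {}"
      "box a b \<times> box c d \<subseteq> R" "R \<subseteq> cbox a b \<times> cbox c d"
    and "Q1 \<in> sets borel" "Q2 \<in> sets borel"
    using dyadic_cube_between_boxes[OF R(2)] dyadic_cube_between_boxes[OF R(3)] R(1)
    by (metis Sigma_mono)
  then have "R \<in> sets (borel \<Otimes>\<^sub>M borel)" using R(1) by (simp add: pair_measureI)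
  then have "R \<in> sets lborel" by (simp only: borel_prod sets_lborel)
  then have "R \<in> sets lebesgue" by (rule sets_completionI_sets)
  moreover have "bounded R"
    using boxes(4) by (rule bounded_subset[rotated]) (intro bounded_Times bounded_cbox)
  ultimately show R_lmeasurable: "R \<in> lmeasurable" by (rule bounded_set_imp_lmeasurable[rotated])
  have "\<not> negligible (box a b \<times> box c d)"
    using boxes(1,2) by (intro open_not_negligible open_Times open_box) simp
  then have "\<not> negligible R" using boxes(3) negligible_subset by blast
  then have "measure lebesgue R \<noteq> 0"
    using R_lmeasurable by (simp add: negligible_iff_measure0)
  then show "0 < measure lebesgue R" using measure_nonneg[of lebesgue R] by linarith
qed

lemma countable_dyadic_grid: "countable (dyadic_grid :: (real^'n::finite) set set)"
proof -
  have "dyadic_grid = (\<lambda>(k, m). dyadic_cube k m) ` (UNIV :: (int \<times> ('n \<Rightarrow> int)) set)"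
    by (auto simp: dyadic_grid_def)
  then show ?thesis by (metis countableI_type countable_image)
qed

lemma countable_dyadic_rects:
  "countable (dyadic_rects :: ((real^'n::finite) \<times> (real^'m::finite)) set set)"
proof -
  have "dyadic_rects = (\<lambda>(Q1, Q2). Q1 \<times> Q2) ` (dyadic_grid \<times> dyadic_grid)"
    by (auto simp: dyadic_rects_def)
  then show ?thesis by (metis countable_SIGMA countable_dyadic_grid countable_image)
qed

lemma abs_avg_le:
  fixes f :: "'a::euclidean_space \<Rightarrow> real"
  assumes f: "f \<in> borel_measurable lebesgue" and bound: "AE x in lebesgue. \<bar>f x\<bar> \<le> B"
    and R: "R \<in> lmeasurable" and "0 \<le> B"
  shows "\<bar>avg f R\<bar> \<le> B"
proof (cases "measure lebesgue R = 0")
  case True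
  then show ?thesis by (simp add: avg_def \<open>0 \<le> B\<close>)
next
  case False
  have R_sets: "R \<in> sets lebesgue" and R_fin: "emeasure lebesgue R < \<infinity>"
    using R by (auto simp: fmeasurable_def)
  have f_int: "set_integrable lebesgue R f"
    unfolding set_integrable_def
    by (rule integrableI_bounded_set_indicator[OF R_sets f R_fin, of B]) (use bound in auto)
  have B_int: "set_integrable lebesgue R (\<lambda>_. B)"
    unfolding set_integrable_def
    by (rule integrableI_bounded_set_indicator[OF R_sets _ R_fin, where B=B]) (use \<open>0 \<le> B\<close> in auto)
  have "\<bar>LINT x:R|lebesgue. f x\<bar> \<le> (LINT x:R|lebesgue. \<bar>f x\<bar>)"
    using set_integral_norm_bound[OF f_int] by simp
  also have "\<dots> \<le> (LINT x:R|lebesgue. B)"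
    using set_integrable_abs[OF f_int] B_int bound
    by (intro set_integral_mono_AE) (auto elim!: eventually_mono)
  also have "\<dots> = B * measure lebesgue R"
    using R_fin by (simp add: set_lebesgue_integral_def mult.commute)
  finally have "\<bar>LINT x:R|lebesgue. f x\<bar> \<le> B * measure lebesgue R" .
  moreover have "0 < measure lebesgue R" using False measure_nonneg[of lebesgue R] by linarith
  ultimately show ?thesis by (simp add: avg_def abs_mult field_simps)
qed

lemma sparse_max_nonneg: "0 \<le> sparse_max S f x"
  unfolding sparse_max_def by (rule Sup_upper) simp

lemma abs_sparse_max [simp]: "\<bar>sparse_max S f x\<bar> = sparse_max S f x"
  using sparse_max_nonneg by (rule abs_ereal_ge0)

lemma sparse_max_ge: "R \<in> S \<Longrightarrow> x \<in> R \<Longrightarrow> ereal \<bar>avg f R\<bar> \<le> sparse_max S f x"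
  unfolding sparse_max_def by (rule Sup_upper) (auto intro!: image_eqI[of _ _ R])

lemma sparse_max_measurable:
  assumes "countable S" "S \<subseteq> sets lebesgue"
  shows "sparse_max S f \<in> borel_measurable lebesgue"
proof -
  have "sparse_max S f = (\<lambda>x. max 0 (SUP R\<in>S. ereal (\<bar>avg f R\<bar> * indicator R x)))"
    by (simp add: sparse_max_def fun_eq_iff Sup_insert sup_max)
  also have "\<dots> \<in> borel_measurable lebesgue"
    using assms by (intro borel_measurable_max borel_measurable_SUP) auto
  finally show ?thesis .
qed

text \<open>In \<open>Pquant_def\<close> the factor \<open>ereal r\<close> is coerced to \<open>ennreal r\<close>.\<close>

lemma Pquant_ge:
  fixes g :: "'a::euclidean_space \<Rightarrow> ereal"
  assumes g: "g \<in> borel_measurable lebesgue" and \<Omega>: "\<Omega> \<in> sets lebesgue"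
    and A: "A \<subseteq> \<Omega>" "\<And>x. x \<in> A \<Longrightarrow> c \<le> g x"
    and large: "ennreal r * emeasure lebesgue \<Omega> < emeasure lebesgue A"
  shows "c \<le> Pquant r \<Omega> g"
  unfolding Pquant_def
proof (rule Inf_greatest, clarsimp)
  fix t assume small: "emeasure lebesgue {x \<in> \<Omega>. ereal t < g x} \<le> ennreal r * emeasure lebesgue \<Omega>"
  show "c \<le> ereal t"
  proof (rule ccontr)
    assume "\<not> c \<le> ereal t"
    then have "A \<subseteq> {x \<in> \<Omega>. ereal t < g x}" using A by (auto simp: not_le intro: less_le_trans)
    moreover have "{x \<in> \<Omega>. ereal t < g x} \<in> sets lebesgue" using g \<Omega> by measurable
    ultimately have "emeasure lebesgue A \<le> emeasure lebesgue {x \<in> \<Omega>. ereal t < g x}"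
      by (rule emeasure_mono)
    with small large show False by simp
  qed
qed

lemma sparseI:
  assumes "S \<subseteq> dyadic_rects"
    and "\<And>R. R \<in> S \<Longrightarrow>
      E R \<subseteq> R \<and> E R \<in> sets lebesgue \<and> measure lebesgue R / 2 \<le> measure lebesgue (E R)"
    and "disjoint_family_on E S"
  shows "sparse S"
  unfolding sparse_def
proof (intro conjI exI[of _ E] ballI impI)
  fix R assume "R \<in> S"
  then have R: "R \<in> lmeasurable" and E: "E R \<subseteq> R" "E R \<in> sets lebesgue"
    "measure lebesgue R / 2 \<le> measure lebesgue (E R)"
    using assms(1,2) dyadic_rect_lmeasurable by blast+
  then show "E R \<subseteq> R" "E R \<in> sets lebesgue" by simp_all
  have "E R \<in> lmeasurable" using R E by (auto intro: fmeasurableI2)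
  then have "ennreal (1/2) * emeasure lebesgue R \<le> emeasure lebesgue (E R)"
    using R E by (subst emeasure_scaled_le_iff) auto
  then show "ereal (1/2) * emeasure lebesgue R \<le> emeasure lebesgue (E R)"
    by (simp only: e2ennreal_ereal)
qed (use assms in \<open>auto simp: disjoint_family_on_def\<close>)

lemma ex_dyadic_scale:
  fixes B p :: real
  assumes "0 < p" "p \<le> B"
  shows "\<exists>n. B / 2^Suc n < p \<and> p \<le> B / 2^n"
proof -
  obtain N where "(1/2)^N < p / B" using real_arch_pow_inv[of "p/B" "1/2"] assms by auto
  then have "B / 2^Suc N < p" using assms by (simp add: field_simps power_divide)
  then have ex: "\<exists>n. B / 2^Suc n < p" ..
  define n where "n = (LEAST n. B / 2^Suc n < p)"
  have "B / 2^Suc n < p" unfolding n_def using ex by (rule LeastI_ex)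
  moreover have "p \<le> B / 2^n"
  proof (cases n)
    case (Suc m)
    then have "m < (LEAST n. B / 2^Suc n < p)" by (simp add: n_def)
    then have "\<not> B / 2^Suc m < p" by (rule not_less_Least)
    then show ?thesis using Suc by simp
  qed (use assms in simp)
  ultimately show ?thesis by blast
qed

definition avg_level ::
    "((real^'n::finite) \<times> (real^'m::finite) \<Rightarrow> real) \<Rightarrow> real \<Rightarrow> nat \<Rightarrow>
      ((real^'n) \<times> (real^'m)) set set"
  where "avg_level f B n = {R \<in> dyadic_rects. B / 2^Suc n < \<bar>avg f R\<bar> \<and> \<bar>avg f R\<bar> \<le> B / 2^n}"

lemma avg_level_subset: "avg_level f B n \<subseteq> dyadic_rects"
  by (auto simp: avg_level_def)

lemma ex_avg_level:
  assumes "R \<in> dyadic_rects" "avg f R \<noteq> 0" "\<bar>avg f R\<bar> \<le> B"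
  shows "\<exists>n. R \<in> avg_level f B n"
  using ex_dyadic_scale[of "\<bar>avg f R\<bar>" B] assms by (auto simp: avg_level_def)

lemma avg_level_half_le:
  assumes "R \<in> avg_level f B n" "R' \<in> avg_level f B k" "k \<le> n" "0 \<le> B"
  shows "\<bar>avg f R\<bar> / 2 \<le> \<bar>avg f R'\<bar>"
proof -
  have "\<bar>avg f R\<bar> / 2 \<le> B / 2^Suc n" using assms(1) by (simp add: avg_level_def)
  also have "\<dots> \<le> B / 2^Suc k"
    using assms(3,4) by (intro divide_left_mono power_increasing) auto
  also have "\<dots> < \<bar>avg f R'\<bar>" using assms(2) by (simp add: avg_level_def)
  finally show ?thesis by simp
qed

lemma sparse_selection_by_levels:
  fixes f :: "(real^'n::finite) \<times> (real^'m::finite) \<Rightarrow> real"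
  assumes "0 < B" and avg_le_B: "\<And>R. R \<in> dyadic_rects \<Longrightarrow> \<bar>avg f R\<bar> \<le> B"
  obtains S where "sparse S"
    and "\<And>R. R \<in> dyadic_rects \<Longrightarrow> \<exists>A \<subseteq> R. A \<in> sets lebesgue \<and>
      measure lebesgue R / 2 < measure lebesgue A \<and> (\<forall>y\<in>A. ereal (\<bar>avg f R\<bar> / 2) \<le> sparse_max S f y)"
proof (rule greedy_selection_by_levels[where C="avg_level f B" and M=lebesgue])
  show "countable (avg_level f B n)" for n
    using countable_dyadic_rects avg_level_subset by (rule countable_subset[rotated])
  show "avg_level f B n \<subseteq> lmeasurable" for n
    using avg_level_subset dyadic_rect_lmeasurable by blast
  show "0 < measure lebesgue R" if "R \<in> avg_level f B n" for n R
    using that avg_level_subset dyadic_rect_lmeasurable(2) by blast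
next
  fix S E
  assume S_level: "\<And>n. S n \<subseteq> avg_level f B n"
    and E: "\<And>R. R \<in> (\<Union>n. S n) \<Longrightarrow>
      E R \<subseteq> R \<and> E R \<in> sets lebesgue \<and> measure lebesgue R / 2 \<le> measure lebesgue (E R)"
    and E_disjoint: "disjoint_family_on E (\<Union>n. S n)"
    and covered: "\<And>n R. R \<in> avg_level f B n \<Longrightarrow>
      measure lebesgue R / 2 < measure lebesgue (R \<inter> \<Union>(\<Union>k\<le>n. S k))"
  have S_rects: "(\<Union>n. S n) \<subseteq> dyadic_rects" using S_level avg_level_subset by blast
  have "\<exists>A \<subseteq> R. A \<in> sets lebesgue \<and> measure lebesgue R / 2 < measure lebesgue A \<and>
      (\<forall>y\<in>A. ereal (\<bar>avg f R\<bar> / 2) \<le> sparse_max (\<Union>n. S n) f y)"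
    if R: "R \<in> dyadic_rects" for R
  proof (cases "avg f R = 0")
    case True
    then show ?thesis
      using dyadic_rect_lmeasurable[OF R] sparse_max_nonneg
      by (intro exI[of _ R]) (auto simp flip: zero_ereal_def)
  next
    case False
    then obtain n where n: "R \<in> avg_level f B n"
      using ex_avg_level[OF R] avg_le_B[OF R] by blast
    have "\<Union>(\<Union>k\<le>n. S k) \<in> sets lebesgue"
      using S_rects countable_dyadic_rects dyadic_rect_lmeasurable(1)
      by (intro sets.countable_Union) (auto intro: countable_subset)
    moreover have "ereal (\<bar>avg f R\<bar> / 2) \<le> sparse_max (\<Union>n. S n) f y"
      if y: "y \<in> R \<inter> \<Union>(\<Union>k\<le>n. S k)" for y
    proof -
      obtain k R' where "k \<le> n" "R' \<in> S k" "y \<in> R'" using y by auto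
      then have "\<bar>avg f R\<bar> / 2 \<le> \<bar>avg f R'\<bar>"
        using avg_level_half_le[OF n _ \<open>k \<le> n\<close>] S_level \<open>0 < B\<close> by fastforce
      also have "ereal \<bar>avg f R'\<bar> \<le> sparse_max (\<Union>n. S n) f y"
        using \<open>R' \<in> S k\<close> \<open>y \<in> R'\<close> by (intro sparse_max_ge) auto
      finally show ?thesis by simp
    qed
    ultimately show ?thesis
      using covered[OF n] dyadic_rect_lmeasurable(1)[OF R]
      by (intro exI[of _ "R \<inter> \<Union>(\<Union>k\<le>n. S k)"]) auto
  qed
  moreover have "sparse (\<Union>n. S n)" using S_rects E E_disjoint by (rule sparseI)
  ultimately show thesis using that by blast
qed

lemma sparse_domination:
  fixes f :: "(real^'n::finite) \<times> (real^'m::finite) \<Rightarrow> real"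
  assumes "Linfty f"
  obtains S where "sparse S"
    and "\<And>R. R \<in> dyadic_rects \<Longrightarrow> ereal \<bar>avg f R\<bar> \<le> 2 * Pquant (1/2) R (sparse_max S f)"
proof -
  obtain B0 where f: "f \<in> borel_measurable lebesgue" and "AE x in lebesgue. \<bar>f x\<bar> \<le> B0"
    using assms by (auto simp: Linfty_def)
  then have bound: "AE x in lebesgue. \<bar>f x\<bar> \<le> max B0 1"
    by (auto elim: eventually_mono)
  have "\<bar>avg f R\<bar> \<le> max B0 1" if "R \<in> dyadic_rects" for R
    using abs_avg_le[OF f bound dyadic_rect_lmeasurable(1)[OF that]] by simp
  then obtain S where "sparse S" and majorant: "\<And>R. R \<in> dyadic_rects \<Longrightarrow> \<exists>A \<subseteq> R.
      A \<in> sets lebesgue \<and> measure lebesgue R / 2 < measure lebesgue A \<and>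
      (\<forall>y\<in>A. ereal (\<bar>avg f R\<bar> / 2) \<le> sparse_max S f y)"
    by (rule sparse_selection_by_levels[rotated]) auto
  have S_measurable: "sparse_max S f \<in> borel_measurable lebesgue"
    using \<open>sparse S\<close> countable_dyadic_rects dyadic_rect_lmeasurable(1)
    by (intro sparse_max_measurable) (auto simp: sparse_def intro: countable_subset)
  have dom: "ereal \<bar>avg f R\<bar> \<le> 2 * Pquant (1/2) R (sparse_max S f)" if R: "R \<in> dyadic_rects" for R
  proof -
    obtain A where A: "A \<subseteq> R" "A \<in> sets lebesgue" "measure lebesgue R / 2 < measure lebesgue A"
      and large: "\<And>y. y \<in> A \<Longrightarrow> ereal (\<bar>avg f R\<bar> / 2) \<le> sparse_max S f y"
      using majorant[OF R] by blast
    have "R \<in> lmeasurable" "A \<in> lmeasurable"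
      using A dyadic_rect_lmeasurable(1)[OF R] by (auto intro: fmeasurableI2)
    then have "ennreal (1/2) * emeasure lebesgue R < emeasure lebesgue A"
      using A(3) by (subst emeasure_scaled_less_iff) auto
    with large have "ereal (\<bar>avg f R\<bar> / 2) \<le> Pquant (1/2) R (sparse_max S f)"
      by (rule Pquant_ge[OF S_measurable fmeasurableD[OF \<open>R \<in> lmeasurable\<close>] A(1)])
    then have "2 * ereal (\<bar>avg f R\<bar> / 2) \<le> 2 * Pquant (1/2) R (sparse_max S f)"
      by (rule ereal_mult_left_mono) simp
    then show ?thesis by simp
  qed
  show ?thesis by (rule that[OF \<open>sparse S\<close> dom])
qed

theorem theoremC:
  "\<exists>C::real. C > 0 \<and>
     (\<forall>f :: (real^'n::finite) \<times> (real^'m::finite) \<Rightarrow> real. Linfty f \<longrightarrow>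
        (\<exists>S. sparse S \<and>
           (\<forall>x. strong_max f x \<le> ereal C * Pmax (1/2) (sparse_max S f) x)))"
proof (intro exI[of _ 2] conjI allI impI)
  fix f :: "(real^'n::finite) \<times> (real^'m::finite) \<Rightarrow> real"
  assume "Linfty f"
  then obtain S where "sparse S"
    and dom: "\<And>R. R \<in> dyadic_rects \<Longrightarrow> ereal \<bar>avg f R\<bar> \<le> 2 * Pquant (1/2) R (sparse_max S f)"
    by (rule sparse_domination) blast
  have "strong_max f x \<le> 2 * Pmax (1/2) (sparse_max S f) x" for x
    unfolding strong_max_def
  proof (rule SUP_least, clarify)
    fix R assume R: "R \<in> dyadic_rects" "x \<in> R"
    then have "Pquant (1/2) R (sparse_max S f) \<le> Pmax (1/2) (sparse_max S f) x"
      unfolding Pmax_def abs_sparse_max by (intro SUP_upper) simp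
    then have "2 * Pquant (1/2) R (sparse_max S f) \<le> 2 * Pmax (1/2) (sparse_max S f) x"
      by (rule ereal_mult_left_mono) simp
    with dom[OF R(1)] show "ereal \<bar>avg f R\<bar> \<le> 2 * Pmax (1/2) (sparse_max S f) x"
      by (rule order_trans)
  qed
  with \<open>sparse S\<close>
  show "\<exists>S. sparse S \<and> (\<forall>x. strong_max f x \<le> ereal 2 * Pmax (1/2) (sparse_max S f) x)"
    by auto
qed simp

end
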